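(* Let $f:\mathbb{R}^{n_0}\to\mathbb{R}^{n_m}$ be an $m$-layer ReLU network with weights $\mathbf{W}^{(k)}$ and biases $\bm{b}^{(k)}$, let $\bm{x}_0\in\mathbb{R}^{n_0}$, $p\in[1,\infty]$, $\epsilon>0$, and let $\bm{l}^{(k)},\bm{u}^{(k)}$, $k\in[m-1]$, be valid pre-ReLU activation bounds on $B_p(\bm{x}_0,\epsilon)$ as described below. For each $j\in[n_m]$ define $$\gamma^L_j=\mu^-_j+\nu_j-\epsilon\|\mathbf{A}^{(0)}_{j,:}\|_q,\qquad \gamma^U_j=\mu^+_j+\nu_j+\epsilon\|\mathbf{A}^{(0)}_{j,:}\|_q,$$ where $1/p+1/q=1$, $\mu^+_j=-\sum_{k=1}^{m-1}\mathbf{A}^{(k)}_{j,:}\mathbf{T}^{(k)}_{:,j}$, $\mu^-_j=-\sum_{k=1}^{m-1}\mathbf{A}^{(k)}_{j,:}\mathbf{H}^{(k)}_{:,j}$ and $\nu_j=\mathbf{A}^{(0)}_{j,:}\bm{x}_0+\bm{b}^{(m)}_j+\sum_{k=1}^{m-1}\mathbf{A}^{(k)}_{j,:}\bm{b}^{(k)}$. Then for every $j\in[n_m]$, $\gamma^L_j\le f_j(\bm{x})\le\gamma^U_j$ for all $\bm{x}\in B_p(\bm{x}_0,\epsilon)$.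
   Context: Network: $\phi_0(\bm{x})=\bm{x}$; for $k\in[m-1]$, $\phi_k(\bm{x})=\sigma(\mathbf{W}^{(k)}\phi_{k-1}(\bm{x})+\bm{b}^{(k)})$, $\mathbf{W}^{(k)}\in\mathbb{R}^{n_k\times n_{k-1}}$, $\bm{b}^{(k)}\in\mathbb{R}^{n_k}$, $\sigma(\bm{y})=\max(\bm{y},\bm{0})$ elementwise; $f(\bm{x})=\mathbf{W}^{(m)}\phi_{m-1}(\bm{x})+\bm{b}^{(m)}$. $B_p(\bm{x}_0,\epsilon)=\{\bm{x}:\|\bm{x}-\bm{x}_0\|_p\le\epsilon\}$. Standing assumption: for each $k\in[m-1]$, $r\in[n_k]$, $\bm{l}^{(k)}_r\le\bm{u}^{(k)}_r$ and $\bm{l}^{(k)}_r\le\mathbf{W}^{(k)}_{r,:}\phi_{k-1}(\bm{x})+\bm{b}^{(k)}_r\le\bm{u}^{(k)}_r$ for all $\bm{x}\in B_p(\bm{x}_0,\epsilon)$. Index sets: $\mathcal{I}^+_k=\{r:\bm{u}^{(k)}_r\ge\bm{l}^{(k)}_r\ge0\}$, $\mathcal{I}^-_k=\{r:\bm{l}^{(k)}_r\le\bm{u}^{(k)}_r\le0\}$, $\mathcal{I}_k=\{r:\bm{l}^{(k)}_r<0<\bm{u}^{(k)}_r\}$. $\mathbf{D}^{(0)}=I_{n_0}$; for $k\in[m-1]$, $\mathbf{D}^{(k)}$ is diagonal $n_k\times n_k$ with $\mathbf{D}^{(k)}_{r,r}=\frac{\bm{u}^{(k)}_r}{\bm{u}^{(k)}_r-\bm{l}^{(k)}_r}$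 if $r\in\mathcal{I}_k$, $1$ if $r\in\mathcal{I}^+_k$, $0$ if $r\in\mathcal{I}^-_k$. $\mathbf{A}^{(m-1)}=\mathbf{W}^{(m)}\mathbf{D}^{(m-1)}$ and for $k=m-1,\dots,1$, $\mathbf{A}^{(k-1)}=\mathbf{A}^{(k)}\mathbf{W}^{(k)}\mathbf{D}^{(k-1)}$. For $k\in[m-1]$, $\mathbf{T}^{(k)},\mathbf{H}^{(k)}\in\mathbb{R}^{n_k\times n_m}$ with $\mathbf{T}^{(k)}_{r,j}=\bm{l}^{(k)}_r$ if $r\in\mathcal{I}_k$ and $\mathbf{A}^{(k)}_{j,r}>0$ (else $0$), and $\mathbf{H}^{(k)}_{r,j}=\bm{l}^{(k)}_r$ if $r\in\mathcal{I}_k$ and $\mathbf{A}^{(k)}_{j,r}<0$ (else $0$). *)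

theory Defs
  imports "HOL-Analysis.Analysis"
begin

text \<open>Conventions: vectors are functions nat \<Rightarrow> real, of which only the first n entries
  matter; matrices are nat \<Rightarrow> nat \<Rightarrow> real (row index first). Layer widths are n k.
  Indices are 0-based: the paper's index set [n] becomes {..<n}. Layers k are 1..m as in the paper.\<close>

definition pnorm :: "nat \<Rightarrow> ereal \<Rightarrow> (nat \<Rightarrow> real) \<Rightarrow> real" where
  "pnorm d p x =
     (if p = \<infinity> then Max (insert 0 ((\<lambda>i. \<bar>x i\<bar>) ` {..<d}))
      else (\<Sum>i<d. \<bar>x i\<bar> powr real_of_ereal p) powr (1 / real_of_ereal p))"

definition dual_exp :: "ereal \<Rightarrow> ereal" where
  "dual_exp p = (if p = 1 then \<infinity> else if p = \<infinity> then 1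
                 else ereal (real_of_ereal p / (real_of_ereal p - 1)))"

fun relu_phi :: "(nat \<Rightarrow> nat) \<Rightarrow> (nat \<Rightarrow> nat \<Rightarrow> nat \<Rightarrow> real) \<Rightarrow> (nat \<Rightarrow> nat \<Rightarrow> real)
                 \<Rightarrow> nat \<Rightarrow> (nat \<Rightarrow> real) \<Rightarrow> (nat \<Rightarrow> real)" where
  "relu_phi n W b 0 x = x"
| "relu_phi n W b (Suc k) x =
     (\<lambda>r. max 0 ((\<Sum>i<n k. W (Suc k) r i * relu_phi n W b k x i) + b (Suc k) r))"

definition preact :: "(nat \<Rightarrow> nat) \<Rightarrow> (nat \<Rightarrow> nat \<Rightarrow> nat \<Rightarrow> real) \<Rightarrow> (nat \<Rightarrow> nat \<Rightarrow> real)
                 \<Rightarrow> nat \<Rightarrow> (nat \<Rightarrow> real) \<Rightarrow> (nat \<Rightarrow> real)" where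
  "preact n W b k x = (\<lambda>r. (\<Sum>i<n (k - 1). W k r i * relu_phi n W b (k - 1) x i) + b k r)"

definition net :: "nat \<Rightarrow> (nat \<Rightarrow> nat) \<Rightarrow> (nat \<Rightarrow> nat \<Rightarrow> nat \<Rightarrow> real) \<Rightarrow> (nat \<Rightarrow> nat \<Rightarrow> real)
                 \<Rightarrow> (nat \<Rightarrow> real) \<Rightarrow> (nat \<Rightarrow> real)" where
  "net m n W b x = preact n W b m x"

definition Ddiag :: "(nat \<Rightarrow> nat \<Rightarrow> real) \<Rightarrow> (nat \<Rightarrow> nat \<Rightarrow> real) \<Rightarrow> nat \<Rightarrow> nat \<Rightarrow> real" where
  "Ddiag l u k r =
     (if k = 0 then 1
      else if l k r < 0 \<and> 0 < u k r then u k r / (u k r - l k r)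
      else if 0 \<le> l k r then 1
      else 0)"

fun Arev :: "nat \<Rightarrow> (nat \<Rightarrow> nat) \<Rightarrow> (nat \<Rightarrow> nat \<Rightarrow> nat \<Rightarrow> real) \<Rightarrow> (nat \<Rightarrow> nat \<Rightarrow> real)
             \<Rightarrow> (nat \<Rightarrow> nat \<Rightarrow> real) \<Rightarrow> nat \<Rightarrow> nat \<Rightarrow> nat \<Rightarrow> real" where
  "Arev m n W l u 0 = (\<lambda>j r. W m j r * Ddiag l u (m - 1) r)"
| "Arev m n W l u (Suc t) =
     (let k = m - 1 - t in
      (\<lambda>j r. (\<Sum>i<n k. Arev m n W l u t j i * W k i r) * Ddiag l u (k - 1) r))"

definition Amat :: "nat \<Rightarrow> (nat \<Rightarrow> nat) \<Rightarrow> (nat \<Rightarrow> nat \<Rightarrow> nat \<Rightarrow> real) \<Rightarrow> (nat \<Rightarrow> nat \<Rightarrow> real)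
             \<Rightarrow> (nat \<Rightarrow> nat \<Rightarrow> real) \<Rightarrow> nat \<Rightarrow> nat \<Rightarrow> nat \<Rightarrow> real" where
  "Amat m n W l u k = Arev m n W l u (m - 1 - k)"

definition Tmat :: "nat \<Rightarrow> (nat \<Rightarrow> nat) \<Rightarrow> (nat \<Rightarrow> nat \<Rightarrow> nat \<Rightarrow> real) \<Rightarrow> (nat \<Rightarrow> nat \<Rightarrow> real)
             \<Rightarrow> (nat \<Rightarrow> nat \<Rightarrow> real) \<Rightarrow> nat \<Rightarrow> nat \<Rightarrow> nat \<Rightarrow> real" where
  "Tmat m n W l u k r j =
     (if l k r < 0 \<and> 0 < u k r \<and> Amat m n W l u k j r > 0 then l k r else 0)"

definition Hmat :: "nat \<Rightarrow> (nat \<Rightarrow> nat) \<Rightarrow> (nat \<Rightarrow> nat \<Rightarrow> nat \<Rightarrow> real) \<Rightarrow> (nat \<Rightarrow> nat \<Rightarrow> real)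
             \<Rightarrow> (nat \<Rightarrow> nat \<Rightarrow> real) \<Rightarrow> nat \<Rightarrow> nat \<Rightarrow> nat \<Rightarrow> real" where
  "Hmat m n W l u k r j =
     (if l k r < 0 \<and> 0 < u k r \<and> Amat m n W l u k j r < 0 then l k r else 0)"

end

theory Submission
  imports Defs
begin

text \<open>Every ReLU neuron whose pre-activation y is known to lie in [l, u] is sandwiched between
  two lines of the same slope d: the chord d (y - l) through (l, 0) and (u, u) lies above max 0 y,
  the line d y through the origin lies below it (for stable neurons d is 0 or 1 and d y is exact).
  Starting from f_j = W^(m)_(j,:) phi_(m-1) + b^(m)_j, replace each phi_k by the upper or lower
  line according to the sign of its coefficient and push the linear map through W^(k); this
  yields the coefficient matrices A^(k) and leaves A^(0)_(j,:) x plus constants. Finally,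
  Hoelder's inequality bounds A^(0)_(j,:) (x - x0) by \<epsilon> times the dual norm.\<close>

lemma Holder_inequality_finite_sum:
  fixes P Q :: real and a z :: "nat \<Rightarrow> real"
  assumes PQ: "P > 1" "Q > 1" "1/P + 1/Q = 1"
  shows "(\<Sum>i<d. \<bar>a i\<bar> * \<bar>z i\<bar>)
    \<le> (\<Sum>i<d. \<bar>a i\<bar> powr Q) powr (1/Q) * (\<Sum>i<d. \<bar>z i\<bar> powr P) powr (1/P)"
proof -
  define SA where "SA = (\<Sum>i<d. \<bar>a i\<bar> powr Q)"
  define SZ where "SZ = (\<Sum>i<d. \<bar>z i\<bar> powr P)"
  have "SA \<ge> 0" "SZ \<ge> 0" unfolding SA_def SZ_def by (auto intro: sum_nonneg)
  show ?thesis
  proof (cases "SA = 0 \<or> SZ = 0")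
    case True
    then have "\<forall>i<d. a i = 0 \<or> z i = 0"
      unfolding SA_def SZ_def by (subst (asm) sum_nonneg_eq_0_iff; auto)+
    then have "(\<Sum>i<d. \<bar>a i\<bar> * \<bar>z i\<bar>) = 0" by (intro sum.neutral) auto
    then show ?thesis by (simp add: SA_def[symmetric] SZ_def[symmetric])
  next
    case False
    with \<open>SA \<ge> 0\<close> \<open>SZ \<ge> 0\<close> have pos: "SA > 0" "SZ > 0" by auto
    define NA where "NA = SA powr (1/Q)"
    define NZ where "NZ = SZ powr (1/P)"
    have N: "NA > 0" "NZ > 0" using pos by (auto simp: NA_def NZ_def)
    have NA_powr: "NA powr Q = SA" and NZ_powr: "NZ powr P = SZ"
      using pos PQ by (simp_all add: NA_def NZ_def powr_powr)
    have "(\<Sum>i<d. \<bar>a i\<bar> * \<bar>z i\<bar>) / (NA * NZ) = (\<Sum>i<d. (\<bar>a i\<bar> / NA) * (\<bar>z i\<bar> / NZ))"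
      by (simp add: sum_divide_distrib)
    also have "\<dots> \<le> (\<Sum>i<d. (\<bar>a i\<bar> / NA) powr Q / Q + (\<bar>z i\<bar> / NZ) powr P / P)"
    proof (rule sum_mono)
      fix i
      show "(\<bar>a i\<bar> / NA) * (\<bar>z i\<bar> / NZ) \<le> (\<bar>a i\<bar> / NA) powr Q / Q + (\<bar>z i\<bar> / NZ) powr P / P"
        using Youngs_inequality[of Q P "\<bar>a i\<bar> / NA" "\<bar>z i\<bar> / NZ"] PQ N by (simp add: add.commute)
    qed
    also have "\<dots> = (\<Sum>i<d. \<bar>a i\<bar> powr Q) / SA / Q + (\<Sum>i<d. \<bar>z i\<bar> powr P) / SZ / P"
      using N by (simp add: sum.distrib powr_divide NA_powr NZ_powr sum_divide_distrib)
    also have "\<dots> = 1" using pos PQ by (simp add: SA_def[symmetric] SZ_def[symmetric])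
    finally have "(\<Sum>i<d. \<bar>a i\<bar> * \<bar>z i\<bar>) \<le> NA * NZ"
      using N by (simp add: divide_le_eq)
    then show ?thesis by (simp add: NA_def NZ_def SA_def SZ_def)
  qed
qed

lemma pnorm_nonneg: "pnorm d p x \<ge> 0"
  unfolding pnorm_def by auto

lemma abs_le_pnorm_infinity: "i < d \<Longrightarrow> \<bar>x i\<bar> \<le> pnorm d \<infinity> x"
  unfolding pnorm_def by (auto intro: Max_ge)

lemma pnorm_one: "pnorm d 1 x = (\<Sum>i<d. \<bar>x i\<bar>)"
  unfolding pnorm_def by (simp add: sum_nonneg)

lemma abs_sum_mult_le_pnorm_dual_exp:
  assumes "1 \<le> p"
  shows "\<bar>\<Sum>i<d. a i * z i\<bar> \<le> pnorm d (dual_exp p) a * pnorm d p z"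
proof -
  have "\<bar>\<Sum>i<d. a i * z i\<bar> \<le> (\<Sum>i<d. \<bar>a i\<bar> * \<bar>z i\<bar>)"
    by (rule order_trans[OF sum_abs]) (simp add: abs_mult)
  also have "\<dots> \<le> pnorm d (dual_exp p) a * pnorm d p z"
  proof -
    consider "p = \<infinity>" | "p = 1" | P where "p = ereal P" "P > 1"
      using assms by (cases p) (auto simp: one_ereal_def, fastforce)
    then show ?thesis
    proof cases
      case 1
      then have "(\<Sum>i<d. \<bar>a i\<bar> * \<bar>z i\<bar>) \<le> (\<Sum>i<d. \<bar>a i\<bar> * pnorm d \<infinity> z)"
        by (intro sum_mono mult_left_mono abs_le_pnorm_infinity) auto
      then show ?thesis using 1 by (simp add: dual_exp_def pnorm_one sum_distrib_right)
    next
      case 2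
      then have "(\<Sum>i<d. \<bar>a i\<bar> * \<bar>z i\<bar>) \<le> (\<Sum>i<d. pnorm d \<infinity> a * \<bar>z i\<bar>)"
        by (intro sum_mono mult_right_mono abs_le_pnorm_infinity) auto
      then show ?thesis using 2 by (simp add: dual_exp_def pnorm_one sum_distrib_left)
    next
      case 3
      define Q where "Q = P / (P - 1)"
      have Q: "Q > 1" "1/P + 1/Q = 1" using 3 by (auto simp: Q_def field_simps)
      have "dual_exp p = ereal Q" using 3 by (simp add: dual_exp_def Q_def)
      then show ?thesis using Holder_inequality_finite_sum[of P Q a z d] 3 Q
        by (simp add: pnorm_def mult.commute)
    qed
  qed
  finally show ?thesis .
qed

definition relu_slope :: "real \<Rightarrow> real \<Rightarrow> real" where
  "relu_slope l u = (if l < 0 \<and> 0 < u then u / (u - l) else if 0 \<le> l then 1 else 0)"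

lemma Ddiag_eq_relu_slope: "k \<noteq> 0 \<Longrightarrow> Ddiag l u k r = relu_slope (l k r) (u k r)"
  by (simp add: Ddiag_def relu_slope_def)

lemma relu_slope_stable:
  assumes "\<not> (l < 0 \<and> 0 < u)" "l \<le> y" "y \<le> u"
  shows "relu_slope l u * y = max 0 y"
  using assms by (auto simp: relu_slope_def)

lemma relu_slope_unstable_bounds:
  assumes "l < 0" "0 < u"
  shows "0 < relu_slope l u" "relu_slope l u \<le> 1"
  using assms by (auto simp: relu_slope_def field_simps)

lemma relu_le_chord:
  assumes "l < 0" "0 < u" "l \<le> y" "y \<le> u"
  shows "max 0 y \<le> relu_slope l u * (y - l)"
proof -
  have "(u - l) * y \<le> u * (y - l)"
    using assms mult_nonpos_nonpos[of l "y - u"] by (simp add: algebra_simps)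
  then have "y \<le> relu_slope l u * (y - l)"
    using assms by (simp add: relu_slope_def field_simps)
  moreover have "0 \<le> relu_slope l u * (y - l)"
    using relu_slope_unstable_bounds[OF assms(1,2)] assms by simp
  ultimately show ?thesis by simp
qed

lemma relu_ge_slope_line:
  assumes "l < 0" "0 < u"
  shows "relu_slope l u * y \<le> max 0 y"
  using relu_slope_unstable_bounds[OF assms] mult_left_le_one_le[of y "relu_slope l u"]
  by (cases "y \<ge> 0") (auto simp: mult_nonneg_nonpos)

text \<open>With a weight c in front, the chord is needed exactly when c d > 0; otherwise the
  line through the origin serves as upper bound.\<close>

lemma weighted_relu_upper:
  assumes "l \<le> y" "y \<le> u"
  shows "c * max 0 y
    \<le> c * relu_slope l u * (y - (if l < 0 \<and> 0 < u \<and> c * relu_slope l u > 0 then l else 0))"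
proof (cases "l < 0 \<and> 0 < u")
  case True
  note d = relu_slope_unstable_bounds[of l u]
  show ?thesis
  proof (cases "c > 0")
    case True
    then show ?thesis using \<open>l < 0 \<and> 0 < u\<close> d relu_le_chord[of l u y] assms
      by (simp add: mult_left_mono mult.assoc)
  next
    case False
    then show ?thesis using \<open>l < 0 \<and> 0 < u\<close> d relu_ge_slope_line[of l u y]
      by (auto simp: mult.assoc zero_less_mult_iff intro!: mult_left_mono_neg)
  qed
next
  case False
  then have "relu_slope l u * y = max 0 y" using assms by (rule relu_slope_stable)
  then show ?thesis using False by (auto simp: mult.assoc)
qed

lemma weighted_relu_lower:
  assumes "l \<le> y" "y \<le> u"
  shows "c * relu_slope l u * (y - (if l < 0 \<and> 0 < u \<and> c * relu_slope l u < 0 then l else 0))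
    \<le> c * max 0 y"
  using weighted_relu_upper[OF assms, of "-c"] by (simp add: algebra_simps)

lemma Amat_top: "Amat m n W l u (m - 1) j r = W m j r * Ddiag l u (m - 1) r"
  by (simp add: Amat_def)

lemma Amat_pred:
  assumes "1 \<le> k" "k \<le> m - 1"
  shows "Amat m n W l u (k - 1) j r = (\<Sum>i<n k. Amat m n W l u k j i * W k i r) * Ddiag l u (k - 1) r"
proof -
  have shift: "m - 1 - (k - 1) = Suc (m - 1 - k)" using assms by simp
  have "m - 1 - (m - 1 - k) = k" "m - Suc (m - Suc k) = k" "m - Suc (Suc (m - Suc k)) = k - 1"
    using assms by auto
  then show ?thesis unfolding Amat_def shift by (simp add: Let_def)
qed

text \<open>A^(k) before the multiplication by D^(k): the coefficient of phi_k in the bound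
  obtained after back-substituting the layers above k.\<close>

definition Apre :: "nat \<Rightarrow> (nat \<Rightarrow> nat) \<Rightarrow> (nat \<Rightarrow> nat \<Rightarrow> nat \<Rightarrow> real) \<Rightarrow> (nat \<Rightarrow> nat \<Rightarrow> real)
    \<Rightarrow> (nat \<Rightarrow> nat \<Rightarrow> real) \<Rightarrow> nat \<Rightarrow> nat \<Rightarrow> nat \<Rightarrow> real" where
  "Apre m n W l u k j i =
     (if k = m - 1 then W m j i else \<Sum>r<n (Suc k). Amat m n W l u (Suc k) j r * W (Suc k) r i)"

lemma Amat_eq_Apre_Ddiag:
  "k \<le> m - 1 \<Longrightarrow> Amat m n W l u k j i = Apre m n W l u k j i * Ddiag l u k i"
  using Amat_top[of m n W l u j i] Amat_pred[of "Suc k" m n W l u j i]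
  by (cases "k = m - 1") (auto simp: Apre_def)

definition backsub_sum :: "nat \<Rightarrow> (nat \<Rightarrow> nat) \<Rightarrow> (nat \<Rightarrow> nat \<Rightarrow> nat \<Rightarrow> real) \<Rightarrow> (nat \<Rightarrow> nat \<Rightarrow> real)
    \<Rightarrow> (nat \<Rightarrow> nat \<Rightarrow> real) \<Rightarrow> (nat \<Rightarrow> nat \<Rightarrow> real) \<Rightarrow> nat \<Rightarrow> nat \<Rightarrow> (nat \<Rightarrow> real) \<Rightarrow> real" where
  "backsub_sum m n W b l u j k x = (\<Sum>r<n k. Apre m n W l u k j r * relu_phi n W b k x r)"

lemma net_eq_backsub_sum: "net m n W b x j = backsub_sum m n W b l u j (m - 1) x + b m j"
  by (simp add: net_def preact_def backsub_sum_def Apre_def)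

lemma backsub_sum_input: "backsub_sum m n W b l u j 0 x = (\<Sum>i<n 0. Amat m n W l u 0 j i * x i)"
  using Amat_eq_Apre_Ddiag[of 0 m n W l u j] by (simp add: backsub_sum_def Ddiag_def)

lemma Amat_preact_sum:
  assumes "1 \<le> k" "k \<le> m - 1"
  shows "(\<Sum>r<n k. Amat m n W l u k j r * preact n W b k x r)
    = backsub_sum m n W b l u j (k - 1) x + (\<Sum>r<n k. Amat m n W l u k j r * b k r)"
proof -
  have "(\<Sum>r<n k. Amat m n W l u k j r * preact n W b k x r)
      = (\<Sum>r<n k. \<Sum>i<n (k - 1). Amat m n W l u k j r * W k r i * relu_phi n W b (k - 1) x i)
        + (\<Sum>r<n k. Amat m n W l u k j r * b k r)"
    by (simp add: preact_def algebra_simps sum.distrib sum_distrib_left)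
  also have "(\<Sum>r<n k. \<Sum>i<n (k - 1). Amat m n W l u k j r * W k r i * relu_phi n W b (k - 1) x i)
      = backsub_sum m n W b l u j (k - 1) x"
  proof -
    have "Apre m n W l u (k - 1) j i = (\<Sum>r<n k. Amat m n W l u k j r * W k r i)" for i
      using assms by (auto simp: Apre_def)
    then show ?thesis by (subst sum.swap) (simp add: backsub_sum_def sum_distrib_right)
  qed
  finally show ?thesis .
qed

lemma backsub_layer:
  assumes k: "1 \<le> k" "k \<le> m - 1"
    and bnd: "\<And>r. r < n k \<Longrightarrow> l k r \<le> preact n W b k x r \<and> preact n W b k x r \<le> u k r"
  shows "backsub_sum m n W b l u j k x \<le> backsub_sum m n W b l u j (k - 1) x
           + (\<Sum>r<n k. Amat m n W l u k j r * (b k r - Tmat m n W l u k r j))"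
      (is "?S \<le> ?S' + ?T")
    and "backsub_sum m n W b l u j (k - 1) x
           + (\<Sum>r<n k. Amat m n W l u k j r * (b k r - Hmat m n W l u k r j))
         \<le> backsub_sum m n W b l u j k x"
      (is "_ + ?H \<le> _")
proof -
  have A: "Amat m n W l u k j r = Apre m n W l u k j r * relu_slope (l k r) (u k r)" for r
    using k Amat_eq_Apre_Ddiag[of k m n W l u j r] by (simp add: Ddiag_eq_relu_slope)
  have phi: "relu_phi n W b k x r = max 0 (preact n W b k x r)" for r
    using k by (cases k) (auto simp: preact_def)
  have "?S \<le> (\<Sum>r<n k. Amat m n W l u k j r * (preact n W b k x r - Tmat m n W l u k r j))"
    unfolding backsub_sum_def phi using bnd
    by (intro sum_mono) (simp add: A Tmat_def weighted_relu_upper)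
  then show "?S \<le> ?S' + ?T"
    using Amat_preact_sum[OF k, of n W l u j b x]
    by (simp add: right_diff_distrib sum_subtractf)
  have "(\<Sum>r<n k. Amat m n W l u k j r * (preact n W b k x r - Hmat m n W l u k r j)) \<le> ?S"
    unfolding backsub_sum_def phi using bnd
    by (intro sum_mono) (simp add: A Hmat_def weighted_relu_lower)
  then show "?S' + ?H \<le> ?S"
    using Amat_preact_sum[OF k, of n W l u j b x]
    by (simp add: right_diff_distrib sum_subtractf)
qed

lemma backsub_upper:
  assumes "K \<le> m - 1"
    and "\<And>k r. k \<in> {1..K} \<Longrightarrow> r < n k \<Longrightarrow> l k r \<le> preact n W b k x r \<and> preact n W b k x r \<le> u k r"
  shows "backsub_sum m n W b l u j K x \<le> (\<Sum>i<n 0. Amat m n W l u 0 j i * x i)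
           + (\<Sum>k\<in>{1..K}. \<Sum>r<n k. Amat m n W l u k j r * (b k r - Tmat m n W l u k r j))"
  using assms
proof (induction K)
  case 0
  then show ?case by (simp add: backsub_sum_input)
next
  case (Suc K)
  then show ?case using backsub_layer(1)[of "Suc K" m n l W b x u j] by (simp add: sum.cl_ivl_Suc)
qed

lemma backsub_lower:
  assumes "K \<le> m - 1"
    and "\<And>k r. k \<in> {1..K} \<Longrightarrow> r < n k \<Longrightarrow> l k r \<le> preact n W b k x r \<and> preact n W b k x r \<le> u k r"
  shows "(\<Sum>i<n 0. Amat m n W l u 0 j i * x i)
           + (\<Sum>k\<in>{1..K}. \<Sum>r<n k. Amat m n W l u k j r * (b k r - Hmat m n W l u k r j))
         \<le> backsub_sum m n W b l u j K x"
  using assms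
proof (induction K)
  case 0
  then show ?case by (simp add: backsub_sum_input)
next
  case (Suc K)
  then show ?case using backsub_layer(2)[of "Suc K" m n l W b x u j] by (simp add: sum.cl_ivl_Suc)
qed

lemma net_bounds:
  assumes p: "1 \<le> p" and x: "pnorm (n 0) p (\<lambda>i. x i - x0 i) \<le> \<epsilon>"
    and bounds: "\<And>k r. k \<in> {1..m-1} \<Longrightarrow> r < n k \<Longrightarrow>
                   l k r \<le> preact n W b k x r \<and> preact n W b k x r \<le> u k r"
  shows "- (\<Sum>k\<in>{1..m-1}. \<Sum>r<n k. Amat m n W l u k j r * Hmat m n W l u k r j)
         + ((\<Sum>i<n 0. Amat m n W l u 0 j i * x0 i) + b m j
            + (\<Sum>k\<in>{1..m-1}. \<Sum>r<n k. Amat m n W l u k j r * b k r))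
         - \<epsilon> * pnorm (n 0) (dual_exp p) (Amat m n W l u 0 j)
       \<le> net m n W b x j" (is "?gL \<le> ?f")
    and "net m n W b x j
       \<le> - (\<Sum>k\<in>{1..m-1}. \<Sum>r<n k. Amat m n W l u k j r * Tmat m n W l u k r j)
         + ((\<Sum>i<n 0. Amat m n W l u 0 j i * x0 i) + b m j
            + (\<Sum>k\<in>{1..m-1}. \<Sum>r<n k. Amat m n W l u k j r * b k r))
         + \<epsilon> * pnorm (n 0) (dual_exp p) (Amat m n W l u 0 j)" (is "_ \<le> ?gU")
proof -
  let ?A = "Amat m n W l u"
  have "backsub_sum m n W b l u j (m - 1) x \<le> (\<Sum>i<n 0. ?A 0 j i * x i)
      + (\<Sum>k\<in>{1..m-1}. \<Sum>r<n k. ?A k j r * b k r) - (\<Sum>k\<in>{1..m-1}. \<Sum>r<n k. ?A k j r * Tmat m n W l u k r j)"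
    using backsub_upper[of "m - 1" m n l W b x u j] bounds
    by (simp add: right_diff_distrib sum_subtractf)
  moreover have "(\<Sum>i<n 0. ?A 0 j i * x i) + (\<Sum>k\<in>{1..m-1}. \<Sum>r<n k. ?A k j r * b k r)
      - (\<Sum>k\<in>{1..m-1}. \<Sum>r<n k. ?A k j r * Hmat m n W l u k r j) \<le> backsub_sum m n W b l u j (m - 1) x"
    using backsub_lower[of "m - 1" m n l W b x u j] bounds
    by (simp add: right_diff_distrib sum_subtractf)
  moreover have "\<bar>\<Sum>i<n 0. ?A 0 j i * (x i - x0 i)\<bar> \<le> \<epsilon> * pnorm (n 0) (dual_exp p) (?A 0 j)"
  proof -
    have "\<bar>\<Sum>i<n 0. ?A 0 j i * (x i - x0 i)\<bar>
        \<le> pnorm (n 0) (dual_exp p) (?A 0 j) * pnorm (n 0) p (\<lambda>i. x i - x0 i)"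
      by (rule abs_sum_mult_le_pnorm_dual_exp[OF p])
    also have "\<dots> \<le> pnorm (n 0) (dual_exp p) (?A 0 j) * \<epsilon>"
      using x by (intro mult_left_mono pnorm_nonneg)
    finally show ?thesis by (simp add: mult.commute)
  qed
  moreover have "(\<Sum>i<n 0. ?A 0 j i * x i)
      = (\<Sum>i<n 0. ?A 0 j i * x0 i) + (\<Sum>i<n 0. ?A 0 j i * (x i - x0 i))"
    by (simp add: algebra_simps sum.distrib sum_subtractf)
  ultimately show "?gL \<le> ?f" and "?f \<le> ?gU"
    unfolding net_eq_backsub_sum[of m n W b x j l u] by (simp_all add: abs_le_iff)
qed

theorem corollary3p7:
  fixes m :: nat and n :: "nat \<Rightarrow> nat"
    and W :: "nat \<Rightarrow> nat \<Rightarrow> nat \<Rightarrow> real" and b :: "nat \<Rightarrow> nat \<Rightarrow> real"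
    and l u :: "nat \<Rightarrow> nat \<Rightarrow> real"
    and x0 :: "nat \<Rightarrow> real" and p :: ereal and \<epsilon> :: real
  assumes m: "1 \<le> m"
    and p: "1 \<le> p"
    and eps: "0 < \<epsilon>"
    and lu: "\<And>k r. k \<in> {1..m-1} \<Longrightarrow> r < n k \<Longrightarrow> l k r \<le> u k r"
    and bounds: "\<And>k r x. k \<in> {1..m-1} \<Longrightarrow> r < n k \<Longrightarrow> pnorm (n 0) p (\<lambda>i. x i - x0 i) \<le> \<epsilon> \<Longrightarrow>
                   l k r \<le> preact n W b k x r \<and> preact n W b k x r \<le> u k r"
  shows "\<forall>j < n m. \<forall>x. pnorm (n 0) p (\<lambda>i. x i - x0 i) \<le> \<epsilon> \<longrightarrow>
     (let A = Amat m n W l u;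
          q = dual_exp p;
          muP = - (\<Sum>k\<in>{1..m-1}. \<Sum>r<n k. A k j r * Tmat m n W l u k r j);
          muM = - (\<Sum>k\<in>{1..m-1}. \<Sum>r<n k. A k j r * Hmat m n W l u k r j);
          nu = (\<Sum>i<n 0. A 0 j i * x0 i) + b m j
               + (\<Sum>k\<in>{1..m-1}. \<Sum>r<n k. A k j r * b k r);
          gL = muM + nu - \<epsilon> * pnorm (n 0) q (A 0 j);
          gU = muP + nu + \<epsilon> * pnorm (n 0) q (A 0 j)
      in gL \<le> net m n W b x j \<and> net m n W b x j \<le> gU)"
  unfolding Let_def by (intro allI impI conjI net_bounds[OF p]) (simp_all add: bounds)

end
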